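(* Let $\mathsf V$ be a quantale, $X=(X,a)$ a $\mathsf V$-category, and let $\varphi:E\rightharpoonup X$, $\psi:X\rightharpoonup E$ be $\mathsf V$-modules with $\varphi\dashv\psi$. Then $\psi^*=\psi\cdot\mathrm y_X^*$ and $\psi_*=(\mathrm y_X)_*\cdot\varphi$; explicitly, for every $h\in[X^{\mathrm{op}},\mathsf V]$, $[h,\psi]=\bigvee_{x\in X}[h,x^*]\otimes\psi(x)$ and $[\psi,h]=\bigvee_{x\in X}\varphi(x)\otimes[x^*,h]$.
   Context: A quantale $(\mathsf V,\otimes,k)$ is a complete anti-symmetric lattice with an associative, commutative operation $\otimes$ with neutral element $k$ distributing over arbitrary suprema; $\hom(u,-)$ is the right adjoint of $u\otimes-$. A $\mathsf V$-category $(X,a)$ is a set with $a:X\times X\to\mathsf V$ such that $k\le a(x,x)$ and $a(x,y)\otimes a(y,z)\le a(x,z)$. A $\mathsf V$-module $\varphi:(X,a)\rightharpoonup(Y,b)$ is a map $X\times Y\to\mathsf V$ with $a(x,x')\otimes\varphi(x',y)\le\varphi(x,y)$ and $\varphi(x,y)\otimes b(y,y')\le\varphi(x,y')$; composition $(\psi\cdot\varphi)(x,z)=\bigvee_y\varphi(x,y)\otimes\psi(y,z)$; $\varphi\dashv\psi$ means $a\le\psi\cdot\varphi$ and $\varphi\cdot\psi\le b$. $E=(\{\star\},k)$; modules $E\rightharpoonup X$ and $X\rightharpoonup E$ are identified with maps $X\to\mathsf V$. $[X^{\mathrm{op}},\mathsf V]$ is the $\mathsf V$-category of modules $X\rightharpoonup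 E$ with $[h,h']=\bigwedge_x\hom(h(x),h'(x))$. For a $\mathsf V$-functor $f:(X,a)\to(Y,b)$, $f_*(x,y)=b(f(x),y)$ and $f^*(y,x)=b(y,f(x))$. $\mathrm y_X:X\to[X^{\mathrm{op}},\mathsf V]$, $x\mapsto x^*$ with $x^*(y)=a(y,x)$, is the Yoneda embedding. An element $\psi\in[X^{\mathrm{op}},\mathsf V]$ is regarded as a $\mathsf V$-functor $E\to[X^{\mathrm{op}},\mathsf V]$, giving $\psi_*:E\rightharpoonup[X^{\mathrm{op}},\mathsf V]$, $h\mapsto[\psi,h]$, and $\psi^*:[X^{\mathrm{op}},\mathsf V]\rightharpoonup E$, $h\mapsto[h,\psi]$. *)

theory Defs
  imports Main
begin

definition quantale :: "('v::complete_lattice \<Rightarrow> 'v \<Rightarrow> 'v) \<Rightarrow> 'v \<Rightarrow> bool" where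
  "quantale tensor k \<longleftrightarrow>
     (\<forall>u v w. tensor (tensor u v) w = tensor u (tensor v w)) \<and>
     (\<forall>u v. tensor u v = tensor v u) \<and>
     (\<forall>u. tensor k u = u) \<and>
     (\<forall>u A. tensor u (Sup A) = Sup (tensor u ` A))"

definition qhom :: "('v::complete_lattice \<Rightarrow> 'v \<Rightarrow> 'v) \<Rightarrow> 'v \<Rightarrow> 'v \<Rightarrow> 'v" where
  "qhom tensor u v = Sup {w. tensor u w \<le> v}"

definition vcat :: "('v::complete_lattice \<Rightarrow> 'v \<Rightarrow> 'v) \<Rightarrow> 'v \<Rightarrow> 'x set \<Rightarrow> ('x \<Rightarrow> 'x \<Rightarrow> 'v) \<Rightarrow> bool" where
  "vcat tensor k X a \<longleftrightarrow>
     (\<forall>x\<in>X. k \<le> a x x) \<and>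
     (\<forall>x\<in>X. \<forall>y\<in>X. \<forall>z\<in>X. tensor (a x y) (a y z) \<le> a x z)"

text \<open>A V-module E \<rightharpoonup> X, identified with a map X \<rightarrow> V
  (the condition e(*,*) \<otimes> phi(x) \<le> phi(x) with e(*,*) = k is automatic).\<close>
definition module_from_E :: "('v::complete_lattice \<Rightarrow> 'v \<Rightarrow> 'v) \<Rightarrow> 'x set \<Rightarrow> ('x \<Rightarrow> 'x \<Rightarrow> 'v) \<Rightarrow> ('x \<Rightarrow> 'v) \<Rightarrow> bool" where
  "module_from_E tensor X a phi \<longleftrightarrow>
     (\<forall>x\<in>X. \<forall>x'\<in>X. tensor (phi x) (a x x') \<le> phi x')"

text \<open>A V-module X \<rightharpoonup> E, identified with a map X \<rightarrow> V; these are the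
  elements of [X^op, V].\<close>
definition module_to_E :: "('v::complete_lattice \<Rightarrow> 'v \<Rightarrow> 'v) \<Rightarrow> 'x set \<Rightarrow> ('x \<Rightarrow> 'x \<Rightarrow> 'v) \<Rightarrow> ('x \<Rightarrow> 'v) \<Rightarrow> bool" where
  "module_to_E tensor X a psi \<longleftrightarrow>
     (\<forall>x\<in>X. \<forall>x'\<in>X. tensor (a x x') (psi x') \<le> psi x)"

text \<open>phi \<turnstile> psi for phi : E \<rightharpoonup> X, psi : X \<rightharpoonup> E:
  e \<le> psi \<cdot> phi and phi \<cdot> psi \<le> a (compositions written out).\<close>
definition module_adjoint :: "('v::complete_lattice \<Rightarrow> 'v \<Rightarrow> 'v) \<Rightarrow> 'v \<Rightarrow> 'x set \<Rightarrow> ('x \<Rightarrow> 'x \<Rightarrow> 'v) \<Rightarrow> ('x \<Rightarrow> 'v) \<Rightarrow> ('x \<Rightarrow> 'v) \<Rightarrow> bool" where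
  "module_adjoint tensor k X a phi psi \<longleftrightarrow>
     k \<le> (SUP x\<in>X. tensor (phi x) (psi x)) \<and>
     (\<forall>x\<in>X. \<forall>x'\<in>X. tensor (psi x) (phi x') \<le> a x x')"

definition presheaf_hom :: "('v::complete_lattice \<Rightarrow> 'v \<Rightarrow> 'v) \<Rightarrow> 'x set \<Rightarrow> ('x \<Rightarrow> 'v) \<Rightarrow> ('x \<Rightarrow> 'v) \<Rightarrow> 'v" where
  "presheaf_hom tensor X h h' = (INF x\<in>X. qhom tensor (h x) (h' x))"

definition yoneda :: "('x \<Rightarrow> 'x \<Rightarrow> 'v) \<Rightarrow> 'x \<Rightarrow> ('x \<Rightarrow> 'v)" where
  "yoneda a x = (\<lambda>y. a y x)"

end

theory Submission
  imports Defs
begin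

text \<open>The unit of the adjunction
  \<open>\<phi> \<turnstile> \<psi>\<close> gives \<open>w \<le> \<Squnion>\<^sub>x \<phi>(x) \<otimes> \<psi>(x) \<otimes> w\<close> for every \<open>w\<close>, which
  yields the inequalities \<open>\<le>\<close> once \<open>\<psi>(x) \<otimes> [h,\<psi>]\<close> resp. \<open>\<psi>(x) \<otimes> [\<psi>,h]\<close> are
  bounded via the counit \<open>\<psi>(y) \<otimes> \<phi>(x) \<le> a(y,x)\<close> resp. the module property of
  \<open>\<psi>\<close>. The inequalities \<open>\<ge>\<close> are evaluation \<open>h(y) \<otimes> [h,h'] \<le> h'(y)\<close>
  combined with the same two facts.\<close>

locale quantale_structure =
  fixes tensor :: "'v::complete_lattice \<Rightarrow> 'v \<Rightarrow> 'v" (infixl "\<otimes>" 70)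
    and k :: 'v
  assumes quantale: "quantale tensor k"
begin

sublocale abel_semigroup tensor
proof
  show "u \<otimes> v \<otimes> w = u \<otimes> (v \<otimes> w)" for u v w
    using quantale unfolding quantale_def by blast
  show "u \<otimes> v = v \<otimes> u" for u v
    using quantale unfolding quantale_def by blast
qed

lemma tensor_unit_left: "k \<otimes> u = u"
  using quantale unfolding quantale_def by blast

lemma tensor_Sup_right: "u \<otimes> Sup A = Sup ((\<otimes>) u ` A)"
  using quantale unfolding quantale_def by blast

lemma tensor_SUP_left: "(SUP x\<in>X. f x) \<otimes> u = (SUP x\<in>X. f x \<otimes> u)"
proof -
  have "(SUP x\<in>X. f x) \<otimes> u = u \<otimes> (SUP x\<in>X. f x)"
    by (rule commute)
  also have "\<dots> = (SUP x\<in>X. u \<otimes> f x)"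
    by (simp add: tensor_Sup_right image_image)
  also have "\<dots> = (SUP x\<in>X. f x \<otimes> u)"
    by (simp only: commute[of u])
  finally show ?thesis .
qed

lemma tensor_mono_right: "v \<le> w \<Longrightarrow> u \<otimes> v \<le> u \<otimes> w"
  using tensor_Sup_right[of u "{v, w}"] by (simp add: sup_absorb2 le_iff_sup)

lemma tensor_mono: "u \<le> u' \<Longrightarrow> v \<le> v' \<Longrightarrow> u \<otimes> v \<le> u' \<otimes> v'"
  using tensor_mono_right[of v v' u] tensor_mono_right[of u u' v'] commute[of _ v']
  by (metis order_trans)

lemma tensor_le_iff_le_qhom: "u \<otimes> w \<le> v \<longleftrightarrow> w \<le> qhom tensor u v"
proof
  assume "u \<otimes> w \<le> v"
  then show "w \<le> qhom tensor u v"
    unfolding qhom_def by (simp add: Sup_upper)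
next
  assume "w \<le> qhom tensor u v"
  then have "u \<otimes> w \<le> u \<otimes> qhom tensor u v"
    by (rule tensor_mono_right)
  also have "\<dots> = Sup ((\<otimes>) u ` {w. u \<otimes> w \<le> v})"
    unfolding qhom_def by (rule tensor_Sup_right)
  also have "\<dots> \<le> v"
    by (auto intro: Sup_least)
  finally show "u \<otimes> w \<le> v" .
qed

lemma le_presheaf_hom_iff:
  "w \<le> presheaf_hom tensor X h h' \<longleftrightarrow> (\<forall>y\<in>X. h y \<otimes> w \<le> h' y)"
  unfolding presheaf_hom_def by (simp add: le_INF_iff tensor_le_iff_le_qhom)

lemma presheaf_hom_eval: "y \<in> X \<Longrightarrow> h y \<otimes> presheaf_hom tensor X h h' \<le> h' y"
  using le_presheaf_hom_iff[of "presheaf_hom tensor X h h'"] by blast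

lemma le_SUP_adjoint_unit:
  assumes "module_adjoint tensor k X a phi psi"
  shows "w \<le> (SUP x\<in>X. phi x \<otimes> (psi x \<otimes> w))"
proof -
  have "w = k \<otimes> w"
    by (simp add: tensor_unit_left)
  also have "\<dots> \<le> (SUP x\<in>X. phi x \<otimes> psi x) \<otimes> w"
    using assms unfolding module_adjoint_def by (intro tensor_mono) simp_all
  also have "\<dots> = (SUP x\<in>X. phi x \<otimes> (psi x \<otimes> w))"
    by (simp add: tensor_SUP_left assoc)
  finally show ?thesis .
qed

lemma presheaf_hom_into_right_adjoint:
  assumes psi: "module_to_E tensor X a psi"
    and adj: "module_adjoint tensor k X a phi psi"
  shows "presheaf_hom tensor X h psi
           = (SUP x\<in>X. presheaf_hom tensor X h (yoneda a x) \<otimes> psi x)"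
proof (rule antisym)
  let ?L = "presheaf_hom tensor X h psi"
  have "phi x \<otimes> (psi x \<otimes> ?L) \<le> presheaf_hom tensor X h (yoneda a x) \<otimes> psi x"
    if x: "x \<in> X" for x
  proof -
    have "h y \<otimes> (phi x \<otimes> ?L) \<le> a y x" if y: "y \<in> X" for y
    proof -
      have "h y \<otimes> (phi x \<otimes> ?L) = (h y \<otimes> ?L) \<otimes> phi x"
        by (simp only: ac_simps)
      also have "\<dots> \<le> psi y \<otimes> phi x"
        using presheaf_hom_eval[OF y] by (rule tensor_mono) simp
      also have "\<dots> \<le> a y x"
        using adj x y unfolding module_adjoint_def by blast
      finally show ?thesis .
    qed
    then have "phi x \<otimes> ?L \<le> presheaf_hom tensor X h (yoneda a x)"
      by (simp add: le_presheaf_hom_iff yoneda_def)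
    then have "(phi x \<otimes> ?L) \<otimes> psi x \<le> presheaf_hom tensor X h (yoneda a x) \<otimes> psi x"
      by (rule tensor_mono) simp
    then show ?thesis
      by (simp only: ac_simps)
  qed
  then have "(SUP x\<in>X. phi x \<otimes> (psi x \<otimes> ?L))
               \<le> (SUP x\<in>X. presheaf_hom tensor X h (yoneda a x) \<otimes> psi x)"
    by (rule SUP_subset_mono[OF order_refl])
  then show "?L \<le> (SUP x\<in>X. presheaf_hom tensor X h (yoneda a x) \<otimes> psi x)"
    by (rule order_trans[OF le_SUP_adjoint_unit[OF adj]])
next
  have "h y \<otimes> (presheaf_hom tensor X h (yoneda a x) \<otimes> psi x) \<le> psi y"
    if x: "x \<in> X" and y: "y \<in> X" for x y
  proof -
    have "h y \<otimes> (presheaf_hom tensor X h (yoneda a x) \<otimes> psi x)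
            = (h y \<otimes> presheaf_hom tensor X h (yoneda a x)) \<otimes> psi x"
      by (simp add: assoc)
    also have "\<dots> \<le> a y x \<otimes> psi x"
      using presheaf_hom_eval[OF y, of h "yoneda a x"]
      by (intro tensor_mono) (simp_all add: yoneda_def)
    also have "\<dots> \<le> psi y"
      using psi x y unfolding module_to_E_def by blast
    finally show ?thesis .
  qed
  then show "(SUP x\<in>X. presheaf_hom tensor X h (yoneda a x) \<otimes> psi x)
              \<le> presheaf_hom tensor X h psi"
    by (intro SUP_least) (simp add: le_presheaf_hom_iff)
qed

lemma presheaf_hom_from_right_adjoint:
  assumes psi: "module_to_E tensor X a psi"
    and adj: "module_adjoint tensor k X a phi psi"
  shows "presheaf_hom tensor X psi h
           = (SUP x\<in>X. phi x \<otimes> presheaf_hom tensor X (yoneda a x) h)"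
proof (rule antisym)
  let ?L = "presheaf_hom tensor X psi h"
  have "psi x \<otimes> ?L \<le> presheaf_hom tensor X (yoneda a x) h" if x: "x \<in> X" for x
  proof -
    have "a y x \<otimes> (psi x \<otimes> ?L) \<le> h y" if y: "y \<in> X" for y
    proof -
      have "a y x \<otimes> (psi x \<otimes> ?L) = (a y x \<otimes> psi x) \<otimes> ?L"
        by (simp add: assoc)
      also have "\<dots> \<le> psi y \<otimes> ?L"
        using psi x y unfolding module_to_E_def by (blast intro: tensor_mono)
      also have "\<dots> \<le> h y"
        using presheaf_hom_eval[OF y] .
      finally show ?thesis .
    qed
    then show ?thesis
      by (simp add: le_presheaf_hom_iff yoneda_def)
  qed
  then have "(SUP x\<in>X. phi x \<otimes> (psi x \<otimes> ?L))
               \<le> (SUP x\<in>X. phi x \<otimes> presheaf_hom tensor X (yoneda a x) h)"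
    by (intro SUP_subset_mono order_refl tensor_mono_right)
  then show "?L \<le> (SUP x\<in>X. phi x \<otimes> presheaf_hom tensor X (yoneda a x) h)"
    by (rule order_trans[OF le_SUP_adjoint_unit[OF adj]])
next
  have "psi y \<otimes> (phi x \<otimes> presheaf_hom tensor X (yoneda a x) h) \<le> h y"
    if x: "x \<in> X" and y: "y \<in> X" for x y
  proof -
    have "psi y \<otimes> (phi x \<otimes> presheaf_hom tensor X (yoneda a x) h)
            = (psi y \<otimes> phi x) \<otimes> presheaf_hom tensor X (yoneda a x) h"
      by (simp add: assoc)
    also have "\<dots> \<le> a y x \<otimes> presheaf_hom tensor X (yoneda a x) h"
      using adj x y unfolding module_adjoint_def by (blast intro: tensor_mono)
    also have "\<dots> \<le> h y"
      using presheaf_hom_eval[OF y, of "yoneda a x" h] by (simp add: yoneda_def)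
    finally show ?thesis .
  qed
  then show "(SUP x\<in>X. phi x \<otimes> presheaf_hom tensor X (yoneda a x) h)
              \<le> presheaf_hom tensor X psi h"
    by (intro SUP_least) (simp add: le_presheaf_hom_iff)
qed

end

theorem lemma1p6:
  fixes tensor :: "'v::complete_lattice \<Rightarrow> 'v \<Rightarrow> 'v" and k :: 'v
    and X :: "'x set" and a :: "'x \<Rightarrow> 'x \<Rightarrow> 'v"
    and phi psi :: "'x \<Rightarrow> 'v"
  assumes "quantale tensor k"
    and "vcat tensor k X a"
    and "module_from_E tensor X a phi"
    and "module_to_E tensor X a psi"
    and "module_adjoint tensor k X a phi psi"
  shows "\<forall>h. module_to_E tensor X a h \<longrightarrow>
           presheaf_hom tensor X h psi
             = (SUP x\<in>X. tensor (presheaf_hom tensor X h (yoneda a x)) (psi x))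
         \<and> presheaf_hom tensor X psi h
             = (SUP x\<in>X. tensor (phi x) (presheaf_hom tensor X (yoneda a x) h))"
proof -
  interpret quantale_structure tensor k
    using assms(1) by (rule quantale_structure.intro)
  show ?thesis
    using presheaf_hom_into_right_adjoint[OF assms(4,5)]
      presheaf_hom_from_right_adjoint[OF assms(4,5)]
    by blast
qed

end
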